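(* Let $\mathcal G=(\bar Q,\mu,\eta)$ be a $\sigma$-admissible intervention rule and let $\tilde{\mathcal M}$ be the absorbing MDP built from $\mathcal G$ with $\tilde R=-1$. If $\hat\pi$ is $\varepsilon$-suboptimal for $\tilde{\mathcal M}$, then for every (comparator) policy $\pi^*$, $$V^{\pi^*}(d_0)-V^{\hat\pi}(d_0)\le \frac{2}{1-\gamma}P_{\mathcal G}(\pi^* )+\varepsilon,\qquad \bar V^{\hat\pi}(d_0)\le \bar Q(d_0,\mu)+\frac{\min\{\sigma+\eta,2\gamma\}}{1-\gamma}+\varepsilon .$$
   Context: $\mathcal M=(\mathcal S,\mathcal A,P,r,\gamma)$ is a discounted MDP with discrete state space $\mathcal S$, discrete action space $\mathcal A$ (every minimum over actions used is assumed attained), transition kernel $P(s'\mid s,a)$, reward $r(s,a)\in[0,1]$, discount $\gamma\in[0,1)$, initial distribution $d_0$. $\mathcal S$ contains two distinguished states $s_\triangleright,s_\circ$; $\mathcal S_{\mathrm{unsafe}}=\{s_\triangleright,s_\circ\}$, $\mathcal S_{\mathrm{safe}}=\mathcal S\setminus\mathcal S_{\mathrm{unsafe}}$. From $s_\triangleright$ every action leads to $s_\circ$ w.p. 1, $s_\circ$ is absorbing, $r(s,a)=0$ for $s\in\mathcal S_{\mathrm{unsafe}}$, and $d_0(s_\circ)=0$. Cost $c(s,a)=\mathbb 1\{s=s_\triangleright\}$; $\bar{\mathcal M}=(\mathcal S,\mathcal A,P,c,\gamma)$. Policies are stationary maps $\pi:\mathcal S\to\Delta(\mathcal A)$. For $f:\mathcal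 S\to\mathbb R$, $f(d)=\mathbb E_{s\sim d}f(s)$; for $g:\mathcal S\times\mathcal A\to\mathbb R$, $g(s,\pi)=\mathbb E_{a\sim\pi(\cdot|s)}g(s,a)$, $g(d,\pi)=\mathbb E_{s\sim d}g(s,\pi)$. $\rho^\pi$ is the law of trajectories $(s_0,a_0,s_1,\dots)$ of $\pi$ in $\mathcal M$ with $s_0\sim d_0$. $Q^\pi(s,a)=\mathbb E[\sum_{t\ge0}\gamma^tr(s_t,a_t)\mid s_0=s,a_0=a]$, $V^\pi(s)=Q^\pi(s,\pi)$; $\bar Q^\pi,\bar V^\pi$ are the same with $c$ in place of $r$. Intervention rule: a triple $\mathcal G=(\bar Q,\mu,\eta)$ with backup policy $\mu$, threshold $\eta\in[0,1]$, and $\bar Q:\mathcal S_{\mathrm{safe}}\times\mathcal A\to[0,1]$ extended by $\bar Q(s_\triangleright,a)=1$, $\bar Q(s_\circ,a)=0$. $\bar A(s,a)=\bar Q(s,a)-\bar Q(s,\mu)$; intervention set $\mathcal I=\{(s,a)\in\mathcal S_{\mathrm{safe}}\times\mathcal A:\bar A(s,a)>\eta\}$. $\mathcal G$ is $\sigma$-admissible ($\sigma\ge0$) if for all $s\in\mathcal S_{\mathrm{safe}},a\in\mathcal A$: $\bar Q(s,a)\in[0,\gamma]$ and $\bar Q(s,a)+\sigma\ge c(s,a)+\gamma\mathbb E_{s'\sim P(\cdot|s,a)}[\bar Q(s',\mu)]$. Absorbing MDP: for $\tilde R\le 0$, $\tilde{\mathcal M}=(\mathcal S\cup\{s_\dagger\},\mathcal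 A,\tilde P,\tilde r,\gamma)$ with a new state $s_\dagger$: $\tilde r(s,a)=\tilde R$ if $(s,a)\in\mathcal I$, $\tilde r(s_\dagger,a)=0$, $\tilde r=r$ otherwise; $\tilde P(\cdot|s,a)$ is the point mass at $s_\dagger$ if $(s,a)\in\mathcal I$ or $s=s_\dagger$, and $\tilde P=P$ otherwise. Policies are extended to $s_\dagger$ arbitrarily; $\tilde V^\pi$ is the value in $\tilde{\mathcal M}$ from $d_0$, $\tilde V^*(d_0)=\sup_\pi\tilde V^\pi(d_0)$, and $\pi$ is $\varepsilon$-suboptimal for $\tilde{\mathcal M}$ if $\tilde V^*(d_0)-\tilde V^\pi(d_0)\le\varepsilon$. $P_{\mathcal G}(\pi)=(1-\gamma)\sum_{h\ge0}\gamma^h\Pr_{\rho^\pi}(\exists t\le h:(s_t,a_t)\in\mathcal I)$. *)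

theory Defs
  imports "HOL-Probability.Probability"
begin

fun traj :: "('s \<Rightarrow> 'a pmf) \<Rightarrow> ('s \<Rightarrow> 'a \<Rightarrow> 's pmf) \<Rightarrow> 's pmf \<Rightarrow> nat \<Rightarrow> ('s \<times> 'a) list pmf" where
  "traj pol P d 0 = do { s \<leftarrow> d; a \<leftarrow> pol s; return_pmf [(s, a)] }"
| "traj pol P d (Suc h) = do { xs \<leftarrow> traj pol P d h;
       s' \<leftarrow> P (fst (last xs)) (snd (last xs)); a' \<leftarrow> pol s';
       return_pmf (xs @ [(s', a')]) }"

definition dval :: "real \<Rightarrow> ('s \<Rightarrow> 'a \<Rightarrow> 's pmf) \<Rightarrow> ('s \<Rightarrow> 'a \<Rightarrow> real) \<Rightarrow> ('s \<Rightarrow> 'a pmf) \<Rightarrow> 's pmf \<Rightarrow> real" where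
  "dval \<gamma> P g pol d = (\<Sum>t. \<gamma> ^ t * measure_pmf.expectation (traj pol P d t)
                                     (\<lambda>xs. g (fst (last xs)) (snd (last xs))))"

definition cost :: "'s \<Rightarrow> 's \<Rightarrow> 'a \<Rightarrow> real" where
  "cost s_tri s a = (if s = s_tri then 1 else 0)"

definition Qext :: "'s \<Rightarrow> 's \<Rightarrow> ('s \<Rightarrow> 'a \<Rightarrow> real) \<Rightarrow> 's \<Rightarrow> 'a \<Rightarrow> real" where
  "Qext s_tri s_circ Qb s a = (if s = s_tri then 1 else if s = s_circ then 0 else Qb s a)"

definition polavg :: "('s \<Rightarrow> 'a \<Rightarrow> real) \<Rightarrow> ('s \<Rightarrow> 'a pmf) \<Rightarrow> 's \<Rightarrow> real" where
  "polavg g pol s = measure_pmf.expectation (pol s) (g s)"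

definition interv :: "'s \<Rightarrow> 's \<Rightarrow> ('s \<Rightarrow> 'a \<Rightarrow> real) \<Rightarrow> ('s \<Rightarrow> 'a pmf) \<Rightarrow> real \<Rightarrow> ('s \<times> 'a) set" where
  "interv s_tri s_circ Qb \<mu> \<eta> = {(s, a). s \<notin> {s_tri, s_circ} \<and>
      Qext s_tri s_circ Qb s a - polavg (Qext s_tri s_circ Qb) \<mu> s > \<eta>}"

definition admissible :: "real \<Rightarrow> ('s \<Rightarrow> 'a \<Rightarrow> 's pmf) \<Rightarrow> 's \<Rightarrow> 's \<Rightarrow> ('s \<Rightarrow> 'a \<Rightarrow> real) \<Rightarrow> ('s \<Rightarrow> 'a pmf) \<Rightarrow> real \<Rightarrow> real \<Rightarrow> bool" where
  "admissible \<gamma> P s_tri s_circ Qb \<mu> \<eta> \<sigma> \<longleftrightarrow> \<sigma> \<ge> 0 \<and> 0 \<le> \<eta> \<and> \<eta> \<le> 1 \<and>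
     (\<forall>s a. s \<notin> {s_tri, s_circ} \<longrightarrow>
        0 \<le> Qb s a \<and> Qb s a \<le> \<gamma> \<and>
        Qb s a + \<sigma> \<ge> cost s_tri s a + \<gamma> * measure_pmf.expectation (P s a) (polavg (Qext s_tri s_circ Qb) \<mu>))"

text \<open>Absorbing MDP on 's option; None plays the role of the new state s_dagger.\<close>
definition absP :: "('s \<times> 'a) set \<Rightarrow> ('s \<Rightarrow> 'a \<Rightarrow> 's pmf) \<Rightarrow> 's option \<Rightarrow> 'a \<Rightarrow> 's option pmf" where
  "absP I P x a = (case x of None \<Rightarrow> return_pmf None
     | Some s \<Rightarrow> if (s, a) \<in> I then return_pmf None else map_pmf Some (P s a))"

definition absr :: "('s \<times> 'a) set \<Rightarrow> real \<Rightarrow> ('s \<Rightarrow> 'a \<Rightarrow> real) \<Rightarrow> 's option \<Rightarrow> 'a \<Rightarrow> real" where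
  "absr I R r x a = (case x of None \<Rightarrow> 0
     | Some s \<Rightarrow> if (s, a) \<in> I then R else r s a)"

text \<open>Extension of a policy to s_dagger (the choice there is irrelevant: s_dagger has reward 0
and is absorbing).\<close>
definition extpol :: "('s \<Rightarrow> 'a pmf) \<Rightarrow> 's option \<Rightarrow> 'a pmf" where
  "extpol pol x = (case x of None \<Rightarrow> return_pmf undefined | Some s \<Rightarrow> pol s)"

definition PG :: "real \<Rightarrow> ('s \<Rightarrow> 'a \<Rightarrow> 's pmf) \<Rightarrow> 's pmf \<Rightarrow> ('s \<times> 'a) set \<Rightarrow> ('s \<Rightarrow> 'a pmf) \<Rightarrow> real" where
  "PG \<gamma> P d0 I pol = (1 - \<gamma>) * (\<Sum>h. \<gamma> ^ h *
      measure_pmf.prob (traj pol P d0 h) {xs. \<exists>x\<in>set xs. x \<in> I})"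

end

theory Submission
  imports Defs
begin

text \<open>Couple the MDP with the absorbing one through a single trajectory carrying a flag that records
  whether an intervention has already occurred: the absorbing MDP follows the trajectory up to and
  including the first intervention and then sits in \<open>s_dagger\<close>. Rewards agree before the first
  intervention and differ by at most 2 afterwards; together with \<open>\<epsilon>\<close>-suboptimality this gives the
  reward bound. Replacing every intervened action by a non-intervened one (the backup policy
  always offers one) turns each penalty \<open>-1\<close> into a reward \<open>\<ge> 0\<close>, so the discounted
  intervention probability \<open>H\<close> of \<open>\<pi>hat\<close> in the absorbing MDP is at most \<open>\<epsilon>\<close>. The cost is then
  bounded by a potential equal to \<open>Q(s,\<mu>)\<close> before the first intervention and to a crude
  cost-to-go bound afterwards: admissibility makes it a supersolution up to \<open>\<sigma> + \<eta>\<close> per step, and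
  switching potentials at the intervention costs at most \<open>\<gamma>\<close>, whence the term \<open>\<gamma> H\<close>.\<close>

abbreviation expect :: "'b pmf \<Rightarrow> ('b \<Rightarrow> real) \<Rightarrow> real" where
  "expect p f \<equiv> measure_pmf.expectation p f"

lemma integrable_pmf_bounded:
  fixes f :: "'b \<Rightarrow> real"
  assumes "\<And>x. \<bar>f x\<bar> \<le> B"
  shows "integrable (measure_pmf p) f"
  by (rule measure_pmf.integrable_const_bound[where B=B]) (auto simp: assms)

lemma expectation_bind_pmf:
  fixes f :: "'b \<Rightarrow> real"
  assumes "\<And>x. \<bar>f x\<bar> \<le> B"
  shows "expect (bind_pmf M N) f = expect M (\<lambda>x. expect (N x) f)"
  unfolding measure_pmf_bind
  by (rule integral_bind[where K="count_space UNIV" and B=B and B'=1])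
    (use assms in \<open>auto simp: space_subprob_algebra measure_pmf.subprob_space_axioms\<close>)

lemma expectation_mono_pmf:
  fixes f g :: "'b \<Rightarrow> real"
  assumes "\<And>x. x \<in> set_pmf p \<Longrightarrow> f x \<le> g x" "\<And>x. \<bar>f x\<bar> \<le> B" "\<And>x. \<bar>g x\<bar> \<le> B'"
  shows "expect p f \<le> expect p g"
  by (rule integral_mono_AE) (auto intro: integrable_pmf_bounded assms simp: AE_measure_pmf_iff)

lemma abs_expectation_pmf_le:
  fixes f :: "'b \<Rightarrow> real"
  assumes "\<And>x. \<bar>f x\<bar> \<le> B"
  shows "\<bar>expect p f\<bar> \<le> B"
proof -
  have "\<bar>expect p f\<bar> \<le> expect p (\<lambda>x. \<bar>f x\<bar>)"
    by (rule integral_abs_bound)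
  also have "\<dots> \<le> expect p (\<lambda>x. B)"
    by (rule expectation_mono_pmf[where B=B and B'="\<bar>B\<bar>"]) (use assms in auto)
  finally show ?thesis by simp
qed

lemma expectation_add_scaled_pmf:
  fixes f g :: "'b \<Rightarrow> real"
  assumes "\<And>y. \<bar>f y\<bar> \<le> Bf" "\<And>y. \<bar>g y\<bar> \<le> Bg"
  shows "expect p (\<lambda>y. f y + c * g y) = expect p f + c * expect p g"
  using integrable_pmf_bounded[OF assms(1), of p] integrable_pmf_bounded[OF assms(2), of p] by simp

lemma exists_le_expectation_pmf:
  fixes g :: "'b \<Rightarrow> real"
  assumes "\<And>x. \<bar>g x\<bar> \<le> B"
  shows "\<exists>a\<in>set_pmf p. g a \<le> expect p g"
proof (rule ccontr)
  assume "\<not> ?thesis"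
  then have "\<And>a. a \<in> set_pmf p \<Longrightarrow> expect p g < g a" by auto
  then have "expect p (\<lambda>_. expect p g) < expect p g"
    by (intro measure_pmf.integral_less_AE_space)
       (auto simp: AE_measure_pmf_iff intro: integrable_pmf_bounded[OF assms])
  then show False by simp
qed

lemma summable_discounted:
  fixes a :: "nat \<Rightarrow> real"
  assumes "0 \<le> \<gamma>" "\<gamma> < 1" "\<And>t. \<bar>a t\<bar> \<le> B"
  shows "summable (\<lambda>t. \<gamma> ^ t * a t)"
proof (rule summable_comparison_test[where g="\<lambda>t. B * \<gamma> ^ t"])
  show "\<exists>N. \<forall>n\<ge>N. norm (\<gamma> ^ n * a n) \<le> B * \<gamma> ^ n"
    using assms by (auto simp: abs_mult mult.commute intro!: mult_right_mono)
  show "summable (\<lambda>t. B * \<gamma> ^ t)"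
    using assms by (intro summable_mult summable_geometric) auto
qed

lemma suminf_discounted_mono:
  fixes a b :: "nat \<Rightarrow> real"
  assumes "0 \<le> \<gamma>" "\<gamma> < 1" "\<And>t. \<bar>a t\<bar> \<le> B" "\<And>t. \<bar>b t\<bar> \<le> B'" "\<And>t. a t \<le> b t"
  shows "(\<Sum>t. \<gamma> ^ t * a t) \<le> (\<Sum>t. \<gamma> ^ t * b t)"
  by (rule suminf_le) (use assms in \<open>auto intro: summable_discounted mult_left_mono\<close>)

lemma suminf_discounted_le_const:
  fixes a :: "nat \<Rightarrow> real"
  assumes "0 \<le> \<gamma>" "\<gamma> < 1" "\<And>t. a t \<le> B" "\<And>t. \<bar>a t\<bar> \<le> B'"
  shows "(\<Sum>t. \<gamma> ^ t * a t) \<le> B / (1 - \<gamma>)"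
proof -
  have "(\<Sum>t. \<gamma> ^ t * a t) \<le> (\<Sum>t. \<gamma> ^ t * B)"
    by (rule suminf_discounted_mono[where B=B' and B'="\<bar>B\<bar>"]) (use assms in auto)
  also have "\<dots> = B * (\<Sum>t. \<gamma> ^ t)"
    using assms by (subst suminf_mult[symmetric]) (auto simp: mult.commute intro: summable_geometric)
  also have "\<dots> = B / (1 - \<gamma>)"
    using assms by (simp add: suminf_geometric)
  finally show ?thesis .
qed

lemma suminf_discounted_affine:
  fixes h :: "nat \<Rightarrow> real"
  assumes g: "0 \<le> \<gamma>" "\<gamma> < 1" and h: "\<And>t. \<bar>h t\<bar> \<le> B"
  shows "(\<Sum>t. \<gamma> ^ t * (c + \<kappa> * h t)) = c / (1 - \<gamma>) + \<kappa> * (\<Sum>t. \<gamma> ^ t * h t)"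
proof (rule sums_unique[symmetric])
  have "(\<lambda>t. \<gamma> ^ t * c + \<kappa> * (\<gamma> ^ t * h t)) sums (1 / (1 - \<gamma>) * c + \<kappa> * (\<Sum>t. \<gamma> ^ t * h t))"
    using g by (intro sums_add sums_mult2 sums_mult geometric_sums summable_sums summable_discounted[OF g h]) auto
  then show "(\<lambda>t. \<gamma> ^ t * (c + \<kappa> * h t)) sums (c / (1 - \<gamma>) + \<kappa> * (\<Sum>t. \<gamma> ^ t * h t))"
    by (simp add: algebra_simps)
qed

lemma suminf_discounted_telescoping:
  fixes c W e :: "nat \<Rightarrow> real"
  assumes g: "0 \<le> \<gamma>" "\<gamma> < 1" and bounded: "\<And>t. \<bar>c t\<bar> \<le> B" "\<And>t. \<bar>e t\<bar> \<le> B"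
    and W: "\<And>t. 0 \<le> W t"
    and step: "\<And>t. c t + \<gamma> * W (Suc t) \<le> W t + e t"
  shows "(\<Sum>t. \<gamma> ^ t * c t) \<le> W 0 + (\<Sum>t. \<gamma> ^ t * e t)"
proof (rule LIMSEQ_le)
  have partial: "(\<Sum>t<n. \<gamma> ^ t * c t) + \<gamma> ^ n * W n \<le> W 0 + (\<Sum>t<n. \<gamma> ^ t * e t)" for n
  proof (induction n)
    case (Suc n)
    have "\<gamma> ^ n * (c n + \<gamma> * W (Suc n)) \<le> \<gamma> ^ n * (W n + e n)"
      using step[of n] g by (intro mult_left_mono) auto
    with Suc show ?case by (simp add: algebra_simps)
  qed simp
  show "\<exists>N. \<forall>n\<ge>N. (\<Sum>t<n. \<gamma> ^ t * c t) \<le> W 0 + (\<Sum>t<n. \<gamma> ^ t * e t)"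
  proof (intro exI allI impI)
    fix n
    have "0 \<le> \<gamma> ^ n * W n" using g W by simp
    with partial[of n] show "(\<Sum>t<n. \<gamma> ^ t * c t) \<le> W 0 + (\<Sum>t<n. \<gamma> ^ t * e t)" by linarith
  qed
  show "(\<lambda>n. \<Sum>t<n. \<gamma> ^ t * c t) \<longlonglongrightarrow> (\<Sum>t. \<gamma> ^ t * c t)"
    by (rule summable_LIMSEQ, rule summable_discounted[OF g bounded(1)])
  show "(\<lambda>n. W 0 + (\<Sum>t<n. \<gamma> ^ t * e t)) \<longlonglongrightarrow> W 0 + (\<Sum>t. \<gamma> ^ t * e t)"
    by (intro tendsto_add tendsto_const summable_LIMSEQ summable_discounted[OF g bounded(2)])
qed

section \<open>The flagged state-action chain\<close>

lemma traj_nonempty: "xs \<in> set_pmf (traj pol P d t) \<Longrightarrow> xs \<noteq> []"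
  by (induction t arbitrary: xs) auto

lemma set_eq_insert_last_butlast: "xs \<noteq> [] \<Longrightarrow> set xs = insert (last xs) (set (butlast xs))"
  by (induction xs rule: rev_induct) auto

definition intervened_before :: "('s \<times> 'a) set \<Rightarrow> ('s \<times> 'a) list \<Rightarrow> bool" where
  "intervened_before I xs \<longleftrightarrow> (\<exists>x\<in>set (butlast xs). x \<in> I)"

definition flagged_chain ::
    "('s \<times> 'a) set \<Rightarrow> ('s \<Rightarrow> 'a pmf) \<Rightarrow> ('s \<Rightarrow> 'a \<Rightarrow> 's pmf) \<Rightarrow> 's pmf \<Rightarrow> nat \<Rightarrow> (('s \<times> 'a) \<times> bool) pmf" where
  "flagged_chain I pol P d t = map_pmf (\<lambda>xs. (last xs, intervened_before I xs)) (traj pol P d t)"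

definition flagged_step ::
    "('s \<times> 'a) set \<Rightarrow> ('s \<Rightarrow> 'a pmf) \<Rightarrow> ('s \<Rightarrow> 'a \<Rightarrow> 's pmf) \<Rightarrow> ('s \<times> 'a) \<times> bool \<Rightarrow> (('s \<times> 'a) \<times> bool) pmf" where
  "flagged_step I pol P y = bind_pmf (P (fst (fst y)) (snd (fst y)))
     (\<lambda>s'. map_pmf (\<lambda>a'. ((s', a'), snd y \<or> fst y \<in> I)) (pol s'))"

lemma flagged_chain_0:
  "flagged_chain I pol P d 0 = bind_pmf d (\<lambda>s. map_pmf (\<lambda>a. ((s, a), False)) (pol s))"
  by (simp add: flagged_chain_def intervened_before_def map_bind_pmf map_pmf_def bind_assoc_pmf bind_return_pmf)

lemma intervened_before_snoc:
  "xs \<noteq> [] \<Longrightarrow> intervened_before I (xs @ [y]) \<longleftrightarrow> intervened_before I xs \<or> last xs \<in> I"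
  using set_eq_insert_last_butlast[of xs] by (auto simp: intervened_before_def)

lemma flagged_chain_Suc:
  "flagged_chain I pol P d (Suc t) = bind_pmf (flagged_chain I pol P d t) (flagged_step I pol P)"
proof -
  let ?flag = "\<lambda>xs. (last xs, intervened_before I xs)"
  have "map_pmf ?flag (P (fst (last xs)) (snd (last xs))
          \<bind> (\<lambda>s'. pol s' \<bind> (\<lambda>a'. return_pmf (xs @ [(s', a')]))))
        = flagged_step I pol P (?flag xs)" if "xs \<in> set_pmf (traj pol P d t)" for xs
    using intervened_before_snoc[OF traj_nonempty[OF that]]
    by (simp add: flagged_step_def map_bind_pmf map_pmf_def bind_assoc_pmf bind_return_pmf)
  then show ?thesis
    unfolding flagged_chain_def by (simp add: map_bind_pmf bind_map_pmf cong: bind_pmf_cong)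
qed

lemma map_last_traj_eq_flagged: "map_pmf last (traj pol P d t) = map_pmf fst (flagged_chain I pol P d t)"
  by (simp add: flagged_chain_def map_pmf_comp)

lemma map_last_traj_0: "map_pmf last (traj pol P d 0) = bind_pmf d (\<lambda>s. map_pmf (Pair s) (pol s))"
  by (simp add: map_bind_pmf map_pmf_def bind_assoc_pmf bind_return_pmf)

lemma map_last_traj_Suc:
  "map_pmf last (traj pol P d (Suc t)) =
     bind_pmf (map_pmf last (traj pol P d t)) (\<lambda>y. bind_pmf (P (fst y) (snd y)) (\<lambda>s'. map_pmf (Pair s') (pol s')))"
  unfolding map_last_traj_eq_flagged[where I="{}"] flagged_chain_Suc
  by (simp add: map_bind_pmf bind_map_pmf flagged_step_def map_pmf_comp)

lemma dval_eq_last: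
  "dval \<gamma> P g pol d = (\<Sum>t. \<gamma> ^ t * expect (map_pmf last (traj pol P d t)) (\<lambda>y. g (fst y) (snd y)))"
  by (simp add: dval_def)

lemma dval_eq_flagged:
  "dval \<gamma> P g pol d = (\<Sum>t. \<gamma> ^ t * expect (flagged_chain I pol P d t) (\<lambda>y. g (fst (fst y)) (snd (fst y))))"
  by (simp add: dval_def flagged_chain_def)

lemma prob_intervened_eq_flagged:
  "measure_pmf.prob (traj pol P d t) {xs. \<exists>x\<in>set xs. x \<in> I}
   = expect (flagged_chain I pol P d t) (indicator {y. snd y \<or> fst y \<in> I})"
proof -
  let ?flag = "\<lambda>xs. (last xs, intervened_before I xs)"
  have "(\<exists>x\<in>set xs. x \<in> I) \<longleftrightarrow> ?flag xs \<in> {y. snd y \<or> fst y \<in> I}"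
    if "xs \<in> set_pmf (traj pol P d t)" for xs
    using set_eq_insert_last_butlast[OF traj_nonempty[OF that]] by (auto simp: intervened_before_def)
  then have "measure_pmf.prob (traj pol P d t) {xs. \<exists>x\<in>set xs. x \<in> I}
      = measure_pmf.prob (traj pol P d t) (?flag -` {y. snd y \<or> fst y \<in> I})"
    by (intro measure_pmf.finite_measure_eq_AE) (auto simp: AE_measure_pmf_iff)
  then show ?thesis by (simp add: flagged_chain_def)
qed

lemma flagged_chain_avoids:
  assumes "\<And>s a. a \<in> set_pmf (pol s) \<Longrightarrow> (s, a) \<notin> I"
  shows "y \<in> set_pmf (flagged_chain I pol P d t) \<Longrightarrow> \<not> snd y \<and> fst y \<notin> I"
proof (induction t arbitrary: y)
  case 0
  then show ?case using assms by (auto simp: flagged_chain_0)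
next
  case (Suc t)
  then obtain z where "z \<in> set_pmf (flagged_chain I pol P d t)" "y \<in> set_pmf (flagged_step I pol P z)"
    by (auto simp: flagged_chain_Suc)
  with Suc.IH assms show ?case by (auto simp: flagged_step_def)
qed

lemma expectation_flagged_chain_0:
  fixes W :: "'s \<Rightarrow> bool \<Rightarrow> real"
  assumes "\<And>s k. \<bar>W s k\<bar> \<le> B"
  shows "expect (flagged_chain I pol P d 0) (\<lambda>y. W (fst (fst y)) (snd y)) = expect d (\<lambda>s. W s False)"
  unfolding flagged_chain_0 by (subst expectation_bind_pmf[where B=B]) (simp_all add: assms)

lemma expectation_flagged_step:
  fixes W :: "'s \<Rightarrow> bool \<Rightarrow> real"
  assumes "\<And>s k. \<bar>W s k\<bar> \<le> B"
  shows "expect (flagged_step I pol P ((s, a), k)) (\<lambda>y. W (fst (fst y)) (snd y))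
       = expect (P s a) (\<lambda>s'. W s' (k \<or> (s, a) \<in> I))"
  unfolding flagged_step_def by (subst expectation_bind_pmf[where B=B]) (simp_all add: assms)

lemma suminf_flagged_le_potential:
  fixes c W e :: "('s \<times> 'a) \<times> bool \<Rightarrow> real"
  assumes g: "0 \<le> \<gamma>" "\<gamma> < 1"
    and W: "\<And>y. 0 \<le> W y" "\<And>y. W y \<le> B" and c: "\<And>y. \<bar>c y\<bar> \<le> B" and e: "\<And>y. \<bar>e y\<bar> \<le> B"
    and step: "\<And>y. c y + \<gamma> * expect (flagged_step I pol P y) W \<le> W y + e y"
  shows "(\<Sum>t. \<gamma> ^ t * expect (flagged_chain I pol P d t) c)
     \<le> expect (flagged_chain I pol P d 0) W + (\<Sum>t. \<gamma> ^ t * expect (flagged_chain I pol P d t) e)"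
proof (rule suminf_discounted_telescoping[OF g])
  let ?L = "flagged_chain I pol P d"
  have absW: "\<bar>W y\<bar> \<le> B" for y using W[of y] by simp
  have absS: "\<bar>expect (flagged_step I pol P y) W\<bar> \<le> B" for y
    by (rule abs_expectation_pmf_le[OF absW])
  show "\<bar>expect (?L t) c\<bar> \<le> B" "\<bar>expect (?L t) e\<bar> \<le> B" for t
    by (rule abs_expectation_pmf_le, fact)+
  show "0 \<le> expect (?L t) W" for t by (rule integral_nonneg_AE) (simp add: W)
  fix t
  have "expect (?L t) c + \<gamma> * expect (?L (Suc t)) W
      = expect (?L t) (\<lambda>y. c y + \<gamma> * expect (flagged_step I pol P y) W)"
    unfolding flagged_chain_Suc expectation_bind_pmf[OF absW]
    by (rule expectation_add_scaled_pmf[OF c absS, symmetric])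
  also have "\<dots> \<le> expect (?L t) (\<lambda>y. W y + 1 * e y)"
  proof (rule expectation_mono_pmf[where B="B + \<gamma> * B" and B'="B + B"])
    fix y
    show "c y + \<gamma> * expect (flagged_step I pol P y) W \<le> W y + 1 * e y" using step[of y] by simp
    have "\<bar>\<gamma> * expect (flagged_step I pol P y) W\<bar> \<le> \<gamma> * B"
      unfolding abs_mult using g absS[of y] by (simp add: mult_left_mono)
    then show "\<bar>c y + \<gamma> * expect (flagged_step I pol P y) W\<bar> \<le> B + \<gamma> * B"
      using c[of y] by linarith
    show "\<bar>W y + 1 * e y\<bar> \<le> B + B" using absW[of y] e[of y] by linarith
  qed
  also have "\<dots> = expect (?L t) W + expect (?L t) e"
    using expectation_add_scaled_pmf[OF absW e, where c=1] by simp
  finally show "expect (?L t) c + \<gamma> * expect (?L (Suc t)) W \<le> expect (?L t) W + expect (?L t) e" .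
qed

lemma dval_le_const:
  assumes "0 \<le> \<gamma>" "\<gamma> < 1" "\<And>s a. \<bar>g s a\<bar> \<le> B"
  shows "dval \<gamma> P g pol d \<le> B / (1 - \<gamma>)"
proof -
  have "\<bar>expect (map_pmf last (traj pol P d t)) (\<lambda>y. g (fst y) (snd y))\<bar> \<le> B" for t
    by (rule abs_expectation_pmf_le) (rule assms)
  then show ?thesis
    unfolding dval_eq_last by (intro suminf_discounted_le_const[OF assms(1,2)]) (auto simp: abs_le_iff)
qed

lemma dval_le_SUP:
  assumes "0 \<le> \<gamma>" "\<gamma> < 1" "\<And>s a. \<bar>g s a\<bar> \<le> B"
  shows "dval \<gamma> P g pol d \<le> (SUP pol'. dval \<gamma> P g pol' d)"
  by (rule cSUP_upper[OF UNIV_I bdd_aboveI2]) (rule dval_le_const[OF assms])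

lemma dval_nonneg:
  assumes "0 \<le> \<gamma>" "\<gamma> < 1" "\<And>s a. 0 \<le> g s a" "\<And>s a. g s a \<le> B"
  shows "0 \<le> dval \<gamma> P g pol d"
proof -
  have "\<bar>g s a\<bar> \<le> B" for s a using assms(3,4)[of s a] by simp
  then show ?thesis
    unfolding dval_eq_last using assms
    by (intro suminf_nonneg summable_discounted[where B=B] abs_expectation_pmf_le mult_nonneg_nonneg
        integral_nonneg_AE) auto
qed

lemma dval_add:
  assumes "0 \<le> \<gamma>" "\<gamma> < 1" "\<And>s a. \<bar>f s a\<bar> \<le> B" "\<And>s a. \<bar>g s a\<bar> \<le> B"
  shows "dval \<gamma> P (\<lambda>s a. f s a + g s a) pol d = dval \<gamma> P f pol d + dval \<gamma> P g pol d"
proof -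
  let ?E = "\<lambda>h t. expect (map_pmf last (traj pol P d t)) (\<lambda>y. h (fst y) (snd y))"
  have "?E (\<lambda>s a. f s a + g s a) t = ?E f t + ?E g t" for t
    by (rule Bochner_Integration.integral_add; rule integrable_pmf_bounded) (rule assms)+
  then have "dval \<gamma> P (\<lambda>s a. f s a + g s a) pol d = (\<Sum>t. \<gamma> ^ t * ?E f t + \<gamma> ^ t * ?E g t)"
    unfolding dval_eq_last by (simp add: distrib_left)
  also have "\<dots> = dval \<gamma> P f pol d + dval \<gamma> P g pol d"
    unfolding dval_eq_last using assms
    by (intro suminf_add[symmetric] summable_discounted[where B=B] abs_expectation_pmf_le) auto
  finally show ?thesis .
qed

lemma dval_modified_policy:
  "dval \<gamma> P g (\<lambda>s. map_pmf (m s) (pol s)) d = dval \<gamma> (\<lambda>s a. P s (m s a)) (\<lambda>s a. g s (m s a)) pol d"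
proof -
  have "map_pmf last (traj (\<lambda>s. map_pmf (m s) (pol s)) P d t)
      = map_pmf (\<lambda>y. (fst y, m (fst y) (snd y))) (map_pmf last (traj pol (\<lambda>s a. P s (m s a)) d t))" for t
  proof (induction t)
    case 0
    show ?case unfolding map_last_traj_0 by (simp add: map_bind_pmf map_pmf_comp)
  next
    case (Suc t)
    show ?case unfolding map_last_traj_Suc Suc by (simp add: bind_map_pmf map_bind_pmf map_pmf_comp)
  qed
  then show ?thesis unfolding dval_eq_last by simp
qed

section \<open>The absorbing MDP as a view of the flagged chain\<close>

text \<open>After the first intervention the absorbing chain sits in \<open>None\<close>, where \<^const>\<open>extpol\<close>
  plays \<^const>\<open>undefined\<close>.\<close>

definition absorbing_view :: "('s \<times> 'a) \<times> bool \<Rightarrow> 's option \<times> 'a" where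
  "absorbing_view y = (if snd y then (None, undefined) else (Some (fst (fst y)), snd (fst y)))"

lemma absP_cong:
  "(\<And>s a. (s, a) \<notin> I \<Longrightarrow> Q s a = P s a) \<Longrightarrow> absP I Q = absP I P"
  by (auto simp: absP_def fun_eq_iff split: option.split)

lemma map_last_absorbing_traj:
  "map_pmf last (traj (extpol pol) (absP I P) (map_pmf Some d) t)
     = map_pmf absorbing_view (flagged_chain I pol P d t)"
proof (induction t)
  case 0
  show ?case unfolding map_last_traj_0 flagged_chain_0
    by (simp add: map_bind_pmf bind_map_pmf map_pmf_comp absorbing_view_def extpol_def)
next
  case (Suc t)
  have "bind_pmf (absP I P (fst (absorbing_view y)) (snd (absorbing_view y)))
          (\<lambda>s'. map_pmf (Pair s') (extpol pol s'))
      = map_pmf absorbing_view (flagged_step I pol P y)" for y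
    by (cases "snd y"; cases "fst y \<in> I")
      (auto simp: absorbing_view_def absP_def extpol_def flagged_step_def map_bind_pmf map_pmf_comp
        bind_return_pmf bind_map_pmf split: prod.split)
  then show ?case
    unfolding map_last_traj_Suc flagged_chain_Suc Suc by (simp add: bind_map_pmf map_bind_pmf)
qed

lemma dval_absorbing_eq_flagged:
  "dval \<gamma> (absP I P) g (extpol pol) (map_pmf Some d)
     = (\<Sum>t. \<gamma> ^ t * expect (flagged_chain I pol P d t) (\<lambda>y. g (fst (absorbing_view y)) (snd (absorbing_view y))))"
  unfolding dval_eq_last map_last_absorbing_traj by simp

lemma dval_absorbing_eq_dval:
  assumes "\<And>s a. a \<in> set_pmf (pol s) \<Longrightarrow> (s, a) \<notin> I"
  shows "dval \<gamma> (absP I P) (absr I R r) (extpol pol) (map_pmf Some d) = dval \<gamma> P r pol d"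
  unfolding dval_absorbing_eq_flagged dval_eq_flagged[where I=I]
proof (intro suminf_cong arg_cong[where f="\<lambda>x. _ * x"] integral_cong_AE)
  show "AE y in flagged_chain I pol P d t.
      absr I R r (fst (absorbing_view y)) (snd (absorbing_view y)) = r (fst (fst y)) (snd (fst y))" for t
    using flagged_chain_avoids[OF assms]
    by (auto simp: AE_measure_pmf_iff absorbing_view_def absr_def)
qed simp_all

lemma abs_absr_le:
  assumes "\<bar>R\<bar> \<le> B" "\<And>s a. \<bar>r s a\<bar> \<le> B"
  shows "\<bar>absr I R r x a\<bar> \<le> B"
  using assms by (cases x) (auto simp: absr_def intro: order_trans[OF abs_ge_zero])

lemma dval_absorbing_le_dval:
  assumes g: "0 \<le> \<gamma>" "\<gamma> < 1" and bounded: "\<bar>R\<bar> \<le> B" "\<And>s a. \<bar>r s a\<bar> \<le> B" "\<And>s a. \<bar>r' s a\<bar> \<le> B"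
    and r'_nonneg: "\<And>s a. 0 \<le> r' s a"
    and le: "\<And>s a. (if (s, a) \<in> I then R else r s a) \<le> r' s a"
  shows "dval \<gamma> (absP I P) (absr I R r) (extpol pol) (map_pmf Some d) \<le> dval \<gamma> P r' pol d"
  unfolding dval_absorbing_eq_flagged dval_eq_flagged[where I=I]
proof (rule suminf_discounted_mono[OF g, where B=B and B'=B])
  fix t
  let ?L = "flagged_chain I pol P d t"
  show "\<bar>expect ?L (\<lambda>y. absr I R r (fst (absorbing_view y)) (snd (absorbing_view y)))\<bar> \<le> B"
    by (intro abs_expectation_pmf_le abs_absr_le bounded)
  show "\<bar>expect ?L (\<lambda>y. r' (fst (fst y)) (snd (fst y)))\<bar> \<le> B"
    by (intro abs_expectation_pmf_le bounded)
  show "expect ?L (\<lambda>y. absr I R r (fst (absorbing_view y)) (snd (absorbing_view y)))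
      \<le> expect ?L (\<lambda>y. r' (fst (fst y)) (snd (fst y)))"
  proof (rule expectation_mono_pmf[where B=B and B'=B])
    fix y
    show "absr I R r (fst (absorbing_view y)) (snd (absorbing_view y)) \<le> r' (fst (fst y)) (snd (fst y))"
      using le[of "fst (fst y)" "snd (fst y)"] r'_nonneg[of "fst (fst y)" "snd (fst y)"]
      by (auto simp: absorbing_view_def absr_def split: if_splits)
  qed (intro abs_absr_le bounded)+
qed

section \<open>Reward and intervention bounds\<close>

lemma dval_le_dval_absorbing_plus_PG:
  assumes g: "0 \<le> \<gamma>" "\<gamma> < 1" and r: "\<And>s a. 0 \<le> r s a \<and> r s a \<le> 1"
  shows "dval \<gamma> P r pol d
    \<le> dval \<gamma> (absP I P) (absr I (-1) r) (extpol pol) (map_pmf Some d) + 2 / (1 - \<gamma>) * PG \<gamma> P d I pol"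
proof -
  let ?L = "flagged_chain I pol P d"
  let ?hit = "indicator {y. snd y \<or> fst y \<in> I} :: _ \<Rightarrow> real"
  define a where "a t = expect (?L t) (\<lambda>y. r (fst (fst y)) (snd (fst y)))" for t
  define b where "b t = expect (?L t) (\<lambda>y. absr I (-1) r (fst (absorbing_view y)) (snd (absorbing_view y)))" for t
  define c where "c t = expect (?L t) ?hit" for t
  have r1: "\<bar>r s a\<bar> \<le> 1" for s a using r[of s a] by simp
  have absr1: "\<bar>absr I (-1) r x a\<bar> \<le> 1" for x a by (rule abs_absr_le) (simp_all add: r1)
  have hit1: "\<bar>?hit y\<bar> \<le> 1" for y by (simp add: indicator_def)
  have bounded: "\<bar>a t\<bar> \<le> 1" "\<bar>b t\<bar> \<le> 1" "\<bar>c t\<bar> \<le> 1" for t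
    unfolding a_def b_def c_def by (intro abs_expectation_pmf_le r1 absr1 hit1)+
  have le: "a t \<le> b t + 2 * c t" for t
    unfolding a_def b_def c_def
  proof (subst expectation_add_scaled_pmf[OF absr1 hit1, symmetric],
      rule expectation_mono_pmf[where B=1 and B'=3])
    fix y
    show "r (fst (fst y)) (snd (fst y))
        \<le> absr I (-1) r (fst (absorbing_view y)) (snd (absorbing_view y)) + 2 * ?hit y"
      using r[of "fst (fst y)" "snd (fst y)"] by (auto simp: absorbing_view_def absr_def indicator_def)
    show "\<bar>absr I (-1) r (fst (absorbing_view y)) (snd (absorbing_view y)) + 2 * ?hit y\<bar> \<le> 3"
      using absr1[of "fst (absorbing_view y)" "snd (absorbing_view y)"] hit1[of y] by linarith
  qed (rule r1)
  have "\<bar>b t + 2 * c t\<bar> \<le> 3" for t using bounded(2,3)[of t] by linarith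
  then have "(\<Sum>t. \<gamma> ^ t * a t) \<le> (\<Sum>t. \<gamma> ^ t * (b t + 2 * c t))"
    by (rule suminf_discounted_mono[OF g bounded(1) _ le])
  also have "\<dots> = (\<Sum>t. \<gamma> ^ t * b t) + 2 * (\<Sum>t. \<gamma> ^ t * c t)"
    using summable_discounted[OF g bounded(2)] summable_discounted[OF g bounded(3)]
    by (simp add: distrib_left suminf_add[symmetric] suminf_mult[symmetric] mult.left_commute)
  also have "2 * (\<Sum>t. \<gamma> ^ t * c t) = 2 / (1 - \<gamma>) * PG \<gamma> P d I pol"
    using g by (simp add: PG_def c_def prob_intervened_eq_flagged)
  finally show ?thesis
    unfolding a_def b_def dval_eq_flagged[where I=I] dval_absorbing_eq_flagged .
qed

lemma performance_bound:
  assumes g: "0 \<le> \<gamma>" "\<gamma> < 1" and r: "\<And>s a. 0 \<le> r s a \<and> r s a \<le> 1"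
    and subopt: "(SUP pol. dval \<gamma> (absP I P) (absr I (-1) r) pol (map_pmf Some d))
        - dval \<gamma> (absP I P) (absr I (-1) r) (extpol \<pi>hat) (map_pmf Some d) \<le> \<epsilon>"
  shows "dval \<gamma> P r \<pi>star d - dval \<gamma> P r \<pi>hat d \<le> 2 / (1 - \<gamma>) * PG \<gamma> P d I \<pi>star + \<epsilon>"
proof -
  have r': "0 \<le> r s a" "r s a \<le> 1" "-1 \<le> r s a" for s a using r[of s a] by auto
  have absr1: "\<bar>absr I (-1) r x a\<bar> \<le> 1" for x a
    by (rule abs_absr_le) (simp_all add: abs_le_iff r')
  have "dval \<gamma> (absP I P) (absr I (-1) r) (extpol \<pi>star) (map_pmf Some d)
      \<le> (SUP pol. dval \<gamma> (absP I P) (absr I (-1) r) pol (map_pmf Some d))"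
    by (rule dval_le_SUP[OF g absr1])
  moreover have "dval \<gamma> (absP I P) (absr I (-1) r) (extpol \<pi>hat) (map_pmf Some d) \<le> dval \<gamma> P r \<pi>hat d"
    by (rule dval_absorbing_le_dval[OF g, where B=1]) (simp_all add: abs_le_iff r')
  ultimately show ?thesis
    using dval_le_dval_absorbing_plus_PG[where r=r and P=P and pol=\<pi>star and d=d and I=I, OF g r] subopt
    by linarith
qed

lemma discounted_interventions_le_suboptimality:
  assumes g: "0 \<le> \<gamma>" "\<gamma> < 1" and r: "\<And>s a. 0 \<le> r s a \<and> r s a \<le> 1"
    and avoidable: "\<And>s. \<exists>a. (s, a) \<notin> I"
  shows "dval \<gamma> (absP I P) (absr I 1 (\<lambda>_ _. 0)) (extpol pol) (map_pmf Some d)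
    \<le> (SUP pol'. dval \<gamma> (absP I P) (absr I (-1) r) pol' (map_pmf Some d))
       - dval \<gamma> (absP I P) (absr I (-1) r) (extpol pol) (map_pmf Some d)"
proof -
  let ?V = "\<lambda>R r P pol. dval \<gamma> (absP I P) (absr I R r) pol (map_pmf Some d)"
  obtain safe where safe: "\<And>s. (s, safe s) \<notin> I" using avoidable by metis
  define m where "m s a = (if (s, a) \<in> I then safe s else a)" for s a
  have r': "0 \<le> r s a" "r s a \<le> 1" for s a using r[of s a] by auto
  have absr1: "\<bar>absr I R r x a\<bar> \<le> 1" if "\<bar>R\<bar> \<le> 1" for R x a
    by (rule abs_absr_le[OF that]) (simp add: abs_le_iff r')
  have hit1: "\<bar>absr I 1 (\<lambda>_ _. 0) x a\<bar> \<le> 1" for x a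
    by (rule abs_absr_le) simp_all
  have "(\<lambda>x a. absr I (-1) r x a + absr I 1 (\<lambda>_ _. 0) x a) = absr I 0 r"
    by (auto simp: fun_eq_iff absr_def split: option.split)
  then have "?V (-1) r P (extpol pol) + ?V 1 (\<lambda>_ _. 0) P (extpol pol) = ?V 0 r P (extpol pol)"
    using dval_add[OF g, where f="absr I (-1) r" and g="absr I 1 (\<lambda>_ _. 0)" and B=1] absr1 hit1 by simp
  also have "\<dots> = ?V 0 r (\<lambda>s a. P s (m s a)) (extpol pol)"
    using absP_cong[of I "\<lambda>s a. P s (m s a)" P] by (simp add: m_def)
  also have "\<dots> \<le> dval \<gamma> (\<lambda>s a. P s (m s a)) (\<lambda>s a. r s (m s a)) pol d"
    by (rule dval_absorbing_le_dval[OF g, where B=1]) (auto simp: m_def abs_le_iff r')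
  also have "\<dots> = dval \<gamma> P r (\<lambda>s. map_pmf (m s) (pol s)) d"
    by (rule dval_modified_policy[symmetric])
  also have "\<dots> = ?V (-1) r P (extpol (\<lambda>s. map_pmf (m s) (pol s)))"
    by (rule dval_absorbing_eq_dval[symmetric]) (auto simp: m_def safe)
  also have "\<dots> \<le> (SUP pol'. ?V (-1) r P pol')"
    by (rule dval_le_SUP[OF g absr1]) simp
  finally show ?thesis by simp
qed

section \<open>Cost bounds\<close>

text \<open>The cost is paid at most once, at \<open>s_tri\<close>, since \<open>s_circ\<close> is absorbing; from a safe state
  \<open>s_tri\<close> is at least one step away.\<close>

definition worst_cost_to_go :: "real \<Rightarrow> 's \<Rightarrow> 's \<Rightarrow> 's \<Rightarrow> real" where
  "worst_cost_to_go \<gamma> s_tri s_circ s = (if s = s_tri then 1 else if s = s_circ then 0 else \<gamma>)"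

lemma worst_cost_to_go_range:
  assumes "0 \<le> \<gamma>" "\<gamma> \<le> 1"
  shows "0 \<le> worst_cost_to_go \<gamma> s_tri s_circ s" "worst_cost_to_go \<gamma> s_tri s_circ s \<le> 1"
    and "\<bar>worst_cost_to_go \<gamma> s_tri s_circ s\<bar> \<le> 1"
  using assms by (simp_all add: worst_cost_to_go_def)

lemma expectation_worst_cost_to_go_le:
  assumes "0 \<le> \<gamma>" "\<gamma> \<le> 1"
  shows "expect p (worst_cost_to_go \<gamma> s_tri s_circ) \<le> 1"
proof -
  have "\<bar>expect p (worst_cost_to_go \<gamma> s_tri s_circ)\<bar> \<le> 1"
    by (rule abs_expectation_pmf_le, rule worst_cost_to_go_range(3)[OF assms])
  then show ?thesis by simp
qed

lemma worst_cost_to_go_step: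
  assumes g: "0 \<le> \<gamma>" "\<gamma> \<le> 1" and distinct: "s_tri \<noteq> s_circ"
    and P_tri: "\<And>a. P s_tri a = return_pmf s_circ" and P_circ: "\<And>a. P s_circ a = return_pmf s_circ"
  shows "cost s_tri s a + \<gamma> * expect (P s a) (worst_cost_to_go \<gamma> s_tri s_circ)
    \<le> worst_cost_to_go \<gamma> s_tri s_circ s"
proof -
  let ?W = "worst_cost_to_go \<gamma> s_tri s_circ"
  have "expect (P s a) ?W \<le> 1" by (rule expectation_worst_cost_to_go_le[OF g])
  then have "\<gamma> * expect (P s a) ?W \<le> \<gamma>" using g by (simp add: mult_left_le)
  then show ?thesis
    using distinct by (auto simp: P_tri P_circ cost_def worst_cost_to_go_def)
qed

locale admissible_rule =
  fixes \<gamma> \<sigma> \<eta> :: real and P :: "'s \<Rightarrow> 'a \<Rightarrow> 's pmf" and s_tri s_circ :: 's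
    and Qb :: "'s \<Rightarrow> 'a \<Rightarrow> real" and \<mu> :: "'s \<Rightarrow> 'a pmf"
  assumes g: "0 \<le> \<gamma>" "\<gamma> < 1" and distinct: "s_tri \<noteq> s_circ"
    and P_tri: "\<And>a. P s_tri a = return_pmf s_circ" and P_circ: "\<And>a. P s_circ a = return_pmf s_circ"
    and Qb_range: "\<And>s a. s \<notin> {s_tri, s_circ} \<Longrightarrow> 0 \<le> Qb s a \<and> Qb s a \<le> 1"
    and adm: "admissible \<gamma> P s_tri s_circ Qb \<mu> \<eta> \<sigma>"
begin

abbreviation I :: "('s \<times> 'a) set" where
  "I \<equiv> interv s_tri s_circ Qb \<mu> \<eta>"

abbreviation backup_value :: "'s \<Rightarrow> real" where
  "backup_value \<equiv> polavg (Qext s_tri s_circ Qb) \<mu>"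

lemma backup_value_range: "0 \<le> backup_value s \<and> backup_value s \<le> 1"
proof -
  have Q: "\<bar>Qext s_tri s_circ Qb s a\<bar> \<le> 1" "0 \<le> Qext s_tri s_circ Qb s a" for a
    using Qb_range[of s a] by (auto simp: Qext_def)
  have "\<bar>backup_value s\<bar> \<le> 1" unfolding polavg_def by (rule abs_expectation_pmf_le[OF Q(1)])
  moreover have "0 \<le> backup_value s" unfolding polavg_def by (rule integral_nonneg_AE) (simp add: Q(2))
  ultimately show ?thesis by simp
qed

lemma backup_value_tri: "backup_value s_tri = 1"
  and backup_value_circ: "backup_value s_circ = 0"
proof -
  have "Qext s_tri s_circ Qb s_tri = (\<lambda>_. 1)" "Qext s_tri s_circ Qb s_circ = (\<lambda>_. 0)"
    using distinct by (simp_all add: fun_eq_iff Qext_def)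
  then show "backup_value s_tri = 1" "backup_value s_circ = 0" by (simp_all add: polavg_def)
qed

lemma exists_not_intervened: "\<exists>a. (s, a) \<notin> I"
proof -
  have "\<bar>Qext s_tri s_circ Qb s a\<bar> \<le> 1" for a
    using Qb_range[of s a] by (auto simp: Qext_def)
  then obtain a where "Qext s_tri s_circ Qb s a \<le> backup_value s"
    unfolding polavg_def using exists_le_expectation_pmf by blast
  moreover have "0 \<le> \<eta>" using adm by (simp add: admissible_def)
  ultimately have "(s, a) \<notin> I" by (simp add: interv_def)
  then show ?thesis ..
qed

lemma backup_value_step:
  assumes "(s, a) \<notin> I"
  shows "cost s_tri s a + \<gamma> * expect (P s a) backup_value \<le> backup_value s + (\<sigma> + \<eta>)"
proof -
  have nonneg: "0 \<le> \<sigma>" "0 \<le> \<eta>" using adm by (simp_all add: admissible_def)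
  consider "s = s_tri" | "s = s_circ" | "s \<notin> {s_tri, s_circ}" by blast
  then show ?thesis
  proof cases
    case 3
    then have "cost s_tri s a + \<gamma> * expect (P s a) backup_value \<le> Qb s a + \<sigma>"
      using adm by (simp add: admissible_def)
    moreover have "Qb s a - backup_value s \<le> \<eta>"
      using assms 3 by (simp add: interv_def Qext_def)
    ultimately show ?thesis by linarith
  qed (use distinct nonneg in \<open>simp_all add: P_tri P_circ cost_def backup_value_tri backup_value_circ\<close>)
qed

lemma flagged_potential_step:
  fixes k :: bool
  defines "W \<equiv> worst_cost_to_go \<gamma> s_tri s_circ"
  shows "cost s_tri s a + \<gamma> * expect (P s a) (\<lambda>s'. if k \<or> (s, a) \<in> I then W s' else backup_value s')
    \<le> (if k then W s else backup_value s) + (\<sigma> + \<eta>) + \<gamma> * (if \<not> k \<and> (s, a) \<in> I then 1 else 0)"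
proof -
  have nonneg: "0 \<le> \<sigma> + \<eta>" using adm by (simp add: admissible_def)
  have W_step: "cost s_tri s a + \<gamma> * expect (P s a) W \<le> W s"
    unfolding W_def by (rule worst_cost_to_go_step) (use g distinct P_tri P_circ in auto)
  consider "k" | "\<not> k" "(s, a) \<in> I" | "\<not> k" "(s, a) \<notin> I" by blast
  then show ?thesis
  proof cases
    case 2
    then have "s \<notin> {s_tri, s_circ}" by (simp add: interv_def)
    moreover have "expect (P s a) W \<le> 1"
      unfolding W_def by (rule expectation_worst_cost_to_go_le) (use g in auto)
    ultimately show ?thesis
      using 2 g nonneg backup_value_range[of s] mult_left_le[of "expect (P s a) W" \<gamma>]
      by (auto simp: cost_def)
  qed (use W_step backup_value_step nonneg in auto)
qed

lemma discounted_cost_le_backup_plus_gamma: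
  "dval \<gamma> P (cost s_tri) pol d \<le> expect d backup_value + \<gamma>"
proof -
  let ?W = "worst_cost_to_go \<gamma> s_tri s_circ"
  have W: "0 \<le> ?W s" "?W s \<le> 1" for s using worst_cost_to_go_range[of \<gamma>] g by simp_all
  have "dval \<gamma> P (cost s_tri) pol d
      \<le> expect (flagged_chain I pol P d 0) (\<lambda>y. ?W (fst (fst y)))
        + (\<Sum>t. \<gamma> ^ t * expect (flagged_chain I pol P d t) (\<lambda>_. 0))"
    unfolding dval_eq_flagged[where I=I]
  proof (rule suminf_flagged_le_potential[OF g, where B=1])
    fix y :: "('s \<times> 'a) \<times> bool"
    obtain s a k where y: "y = ((s, a), k)" by (metis prod.collapse)
    have "expect (flagged_step I pol P y) (\<lambda>y. ?W (fst (fst y))) = expect (P s a) ?W"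
      unfolding y by (rule expectation_flagged_step[where W="\<lambda>s _. ?W s" and B=1]) (simp add: W abs_le_iff)
    then show "cost s_tri (fst (fst y)) (snd (fst y))
        + \<gamma> * expect (flagged_step I pol P y) (\<lambda>y. ?W (fst (fst y))) \<le> ?W (fst (fst y)) + 0"
      using worst_cost_to_go_step[of \<gamma> s_tri s_circ P s a] g distinct P_tri P_circ by (simp add: y)
  qed (simp_all add: W cost_def)
  also have "\<dots> = expect d ?W"
    using expectation_flagged_chain_0[where W="\<lambda>s _. ?W s" and B=1] W by (simp add: abs_le_iff)
  also have "\<dots> \<le> expect d (\<lambda>s. backup_value s + \<gamma> * 1)"
  proof (rule expectation_mono_pmf[where B=1 and B'=2])
    fix s
    show "?W s \<le> backup_value s + \<gamma> * 1"
      using backup_value_range[of s] g by (auto simp: worst_cost_to_go_def backup_value_tri backup_value_circ)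
    show "\<bar>?W s\<bar> \<le> 1" using W[of s] by simp
    show "\<bar>backup_value s + \<gamma> * 1\<bar> \<le> 2" using backup_value_range[of s] g by simp
  qed
  also have "\<dots> = expect d backup_value + \<gamma>"
    using expectation_add_scaled_pmf[of backup_value 1 "\<lambda>_. 1" 1 d \<gamma>] backup_value_range
    by (simp add: abs_le_iff)
  finally show ?thesis .
qed

lemma discounted_cost_le_backup:
  "dval \<gamma> P (cost s_tri) pol d \<le> expect d backup_value + (\<sigma> + \<eta>) / (1 - \<gamma>)
     + \<gamma> * dval \<gamma> (absP I P) (absr I 1 (\<lambda>_ _. 0)) (extpol pol) (map_pmf Some d)"
proof -
  let ?L = "flagged_chain I pol P d"
  let ?hit = "\<lambda>y. absr I 1 (\<lambda>_ _. 0) (fst (absorbing_view y)) (snd (absorbing_view y))"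
  define G where "G s k = (if k then worst_cost_to_go \<gamma> s_tri s_circ s else backup_value s)" for s k
  define h where "h t = expect (?L t) ?hit" for t
  have nonneg: "0 \<le> \<sigma> + \<eta>" using adm by (simp add: admissible_def)
  have G: "0 \<le> G s k" "G s k \<le> 1" "G s k \<le> 1 + \<sigma> + \<eta>" for s k
    using worst_cost_to_go_range[of \<gamma> s_tri s_circ s] backup_value_range[of s] g nonneg
    by (simp_all add: G_def)
  have hit_eq: "?hit ((s, a), k) = (if \<not> k \<and> (s, a) \<in> I then 1 else 0)" for s a k
    by (simp add: absorbing_view_def absr_def)
  have hit: "0 \<le> ?hit y" "?hit y \<le> 1" for y
    using hit_eq[of "fst (fst y)" "snd (fst y)" "snd y"] by simp_all
  have h: "\<bar>h t\<bar> \<le> 1" for t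
    unfolding h_def by (rule abs_expectation_pmf_le) (simp add: hit abs_le_iff)
  have "dval \<gamma> P (cost s_tri) pol d \<le> expect (?L 0) (\<lambda>y. G (fst (fst y)) (snd y))
      + (\<Sum>t. \<gamma> ^ t * expect (?L t) (\<lambda>y. (\<sigma> + \<eta>) + \<gamma> * ?hit y))"
    unfolding dval_eq_flagged[where I=I]
  proof (rule suminf_flagged_le_potential[OF g, where B="1 + \<sigma> + \<eta>"])
    fix y :: "('s \<times> 'a) \<times> bool"
    obtain s a k where y: "y = ((s, a), k)" by (metis prod.collapse)
    have "expect (flagged_step I pol P y) (\<lambda>y. G (fst (fst y)) (snd y))
        = expect (P s a) (\<lambda>s'. G s' (k \<or> (s, a) \<in> I))"
      unfolding y by (rule expectation_flagged_step[where B=1]) (simp add: G abs_le_iff)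
    then show "cost s_tri (fst (fst y)) (snd (fst y))
        + \<gamma> * expect (flagged_step I pol P y) (\<lambda>y. G (fst (fst y)) (snd y))
        \<le> G (fst (fst y)) (snd y) + ((\<sigma> + \<eta>) + \<gamma> * ?hit y)"
      using flagged_potential_step[of s a k] by (simp add: y G_def hit_eq add.assoc)
    show "\<bar>(\<sigma> + \<eta>) + \<gamma> * ?hit y\<bar> \<le> 1 + \<sigma> + \<eta>"
      using hit[of y] g nonneg mult_left_le[of "?hit y" \<gamma>] by simp
  qed (use nonneg in \<open>simp_all add: G cost_def\<close>)
  also have "expect (?L 0) (\<lambda>y. G (fst (fst y)) (snd y)) = expect d backup_value"
    using expectation_flagged_chain_0[where W=G and B=1] G(1,2) by (simp add: G_def)
  also have "(\<Sum>t. \<gamma> ^ t * expect (?L t) (\<lambda>y. (\<sigma> + \<eta>) + \<gamma> * ?hit y))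
      = (\<Sum>t. \<gamma> ^ t * ((\<sigma> + \<eta>) + \<gamma> * h t))"
    unfolding h_def
    by (subst expectation_add_scaled_pmf[where Bf="\<bar>\<sigma> + \<eta>\<bar>" and Bg=1]) (simp_all add: hit abs_le_iff)
  also have "\<dots> = (\<sigma> + \<eta>) / (1 - \<gamma>) + \<gamma> * (\<Sum>t. \<gamma> ^ t * h t)"
    by (rule suminf_discounted_affine[OF g h])
  also have "(\<Sum>t. \<gamma> ^ t * h t) = dval \<gamma> (absP I P) (absr I 1 (\<lambda>_ _. 0)) (extpol pol) (map_pmf Some d)"
    unfolding h_def dval_absorbing_eq_flagged ..
  finally show ?thesis by (simp add: add.assoc)
qed

end

theorem mainTheorem1:
  fixes P :: "'s::countable \<Rightarrow> 'a::countable \<Rightarrow> 's pmf"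
    and r :: "'s \<Rightarrow> 'a \<Rightarrow> real"
    and \<gamma> \<sigma> \<eta> \<epsilon> :: real
    and d0 :: "'s pmf"
    and s_tri s_circ :: 's
    and Qb :: "'s \<Rightarrow> 'a \<Rightarrow> real"
    and \<mu> \<pi>hat \<pi>star :: "'s \<Rightarrow> 'a pmf"
  assumes gamma: "0 \<le> \<gamma>" "\<gamma> < 1"
    and distinct: "s_tri \<noteq> s_circ"
    and r_range: "\<And>s a. 0 \<le> r s a \<and> r s a \<le> 1"
    and r_unsafe: "\<And>a. r s_tri a = 0" "\<And>a. r s_circ a = 0"
    and P_tri: "\<And>a. P s_tri a = return_pmf s_circ"
    and P_circ: "\<And>a. P s_circ a = return_pmf s_circ"
    and d0_circ: "pmf d0 s_circ = 0"
    and Qb_range: "\<And>s a. s \<notin> {s_tri, s_circ} \<Longrightarrow> 0 \<le> Qb s a \<and> Qb s a \<le> 1"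
    and adm: "admissible \<gamma> P s_tri s_circ Qb \<mu> \<eta> \<sigma>"
    and subopt:
      "(SUP pol :: 's option \<Rightarrow> 'a pmf.
          dval \<gamma> (absP (interv s_tri s_circ Qb \<mu> \<eta>) P) (absr (interv s_tri s_circ Qb \<mu> \<eta>) (-1) r)
               pol (map_pmf Some d0))
       - dval \<gamma> (absP (interv s_tri s_circ Qb \<mu> \<eta>) P) (absr (interv s_tri s_circ Qb \<mu> \<eta>) (-1) r)
               (extpol \<pi>hat) (map_pmf Some d0) \<le> \<epsilon>"
  shows "dval \<gamma> P r \<pi>star d0 - dval \<gamma> P r \<pi>hat d0
           \<le> 2 / (1 - \<gamma>) * PG \<gamma> P d0 (interv s_tri s_circ Qb \<mu> \<eta>) \<pi>star + \<epsilon>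
         \<and> dval \<gamma> P (cost s_tri) \<pi>hat d0
           \<le> measure_pmf.expectation d0 (polavg (Qext s_tri s_circ Qb) \<mu>)
             + min (\<sigma> + \<eta>) (2 * \<gamma>) / (1 - \<gamma>) + \<epsilon>"
proof
  let ?I = "interv s_tri s_circ Qb \<mu> \<eta>"
  let ?H = "dval \<gamma> (absP ?I P) (absr ?I 1 (\<lambda>_ _. 0)) (extpol \<pi>hat) (map_pmf Some d0)"
  show "dval \<gamma> P r \<pi>star d0 - dval \<gamma> P r \<pi>hat d0 \<le> 2 / (1 - \<gamma>) * PG \<gamma> P d0 ?I \<pi>star + \<epsilon>"
    by (rule performance_bound[OF gamma r_range subopt])
  have rule: "admissible_rule \<gamma> \<sigma> \<eta> P s_tri s_circ Qb \<mu>"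
    using gamma distinct P_tri P_circ Qb_range adm by unfold_locales
  have H: "?H \<le> \<epsilon>"
    using discounted_interventions_le_suboptimality[where r=r and P=P and pol=\<pi>hat and d=d0, OF gamma r_range
        admissible_rule.exists_not_intervened[OF rule]] subopt
    by linarith
  have "0 \<le> ?H"
    by (rule dval_nonneg[OF gamma, where B=1]) (auto simp: absr_def split: option.split)
  then have "0 \<le> \<epsilon>" "\<gamma> * ?H \<le> \<epsilon>" using H gamma mult_left_le_one_le[of ?H \<gamma>] by linarith+
  moreover have "\<gamma> \<le> 2 * \<gamma> / (1 - \<gamma>)" using gamma by (simp add: field_simps)
  ultimately show "dval \<gamma> P (cost s_tri) \<pi>hat d0
      \<le> measure_pmf.expectation d0 (polavg (Qext s_tri s_circ Qb) \<mu>) + min (\<sigma> + \<eta>) (2 * \<gamma>) / (1 - \<gamma>) + \<epsilon>"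
    using admissible_rule.discounted_cost_le_backup[OF rule, of \<pi>hat d0]
      admissible_rule.discounted_cost_le_backup_plus_gamma[OF rule, of \<pi>hat d0]
    by (auto simp: min_def)
qed

end
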